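(* Let $G$ be a simple connected bipartite graph on $n\ge 3$ vertices with maximum degree $\Delta\le n-2$ and Wiener index $W$. Suppose $\deg(v_1)=\cdots=\deg(v_k)=\Delta$ for some $1\le k\le n$, and for $1\le i\le k$ let $a_i=4(W-D_i-t_{v_i}\Delta)(\Delta+1)+2n\Delta^{2}+nD_i+nt_{v_i}\Delta$ and $b_i=4D_i^{2}+8D_it_{v_i}\Delta+4t_{v_i}^{2}\Delta^{2}-8W\Delta^{2}-4WD_i-4Wt_{v_i}\Delta$. Then (i) $\displaystyle q^{\mathcal{D}}(G)\ge \max_{1\le i\le k}\frac{a_i+\sqrt{a_i^{2}+4b_i(1+\Delta)(n-\Delta-1)}}{2(1+\Delta)(n-\Delta-1)}$; (ii) $\displaystyle q^{\mathcal{D}}_{min}(G)\le \min_{1\le i\le k}\frac{a_i-\sqrt{a_i^{2}+4b_i(1+\Delta)(n-\Delta-1)}}{2(1+\Delta)(n-\Delta-1)}$.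
   Context: $G$ has vertex set $\{v_1,\dots,v_n\}$; $d_G$ is the graph distance; $\mathcal{D}(G)=(d_G(v_i,v_j))$. $D_i=\sum_{j\ne i}d_G(v_i,v_j)$ is the transmission of $v_i$, $Tr(G)=\mathrm{diag}(D_1,\dots,D_n)$, $\mathcal{Q}(G)=Tr(G)+\mathcal{D}(G)$. $W=\sum_{i<j}d_G(v_i,v_j)$. For a vertex $v$ of degree $d_v$, $t_v=\frac{1}{d_v}\sum_{v_j\sim v}D_j$. $q^{\mathcal{D}}(G)$, $q^{\mathcal{D}}_{min}(G)$ are the largest and least eigenvalues of $\mathcal{Q}(G)$. *)

theory Defs
  imports "HOL-Analysis.Analysis"
begin

definition simple_graph :: "('n \<Rightarrow> 'n \<Rightarrow> bool) \<Rightarrow> bool" where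
  "simple_graph E \<longleftrightarrow> (\<forall>u v. E u v \<longrightarrow> E v u) \<and> (\<forall>u. \<not> E u u)"

fun walk :: "('n \<Rightarrow> 'n \<Rightarrow> bool) \<Rightarrow> 'n list \<Rightarrow> bool" where
  "walk E [] = False"
| "walk E [x] = True"
| "walk E (x # y # xs) = (E x y \<and> walk E (y # xs))"

definition connected_graph :: "('n \<Rightarrow> 'n \<Rightarrow> bool) \<Rightarrow> bool" where
  "connected_graph E \<longleftrightarrow> (\<forall>u v. \<exists>p. walk E p \<and> hd p = u \<and> last p = v)"

definition bipartite :: "('n \<Rightarrow> 'n \<Rightarrow> bool) \<Rightarrow> bool" where
  "bipartite E \<longleftrightarrow> (\<exists>S. \<forall>u v. E u v \<longrightarrow> (u \<in> S \<longleftrightarrow> v \<notin> S))"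

definition gdist :: "('n \<Rightarrow> 'n \<Rightarrow> bool) \<Rightarrow> 'n \<Rightarrow> 'n \<Rightarrow> nat" where
  "gdist E u v = (LEAST k. \<exists>p. walk E p \<and> hd p = u \<and> last p = v \<and> length p = Suc k)"

definition degree :: "('n::finite \<Rightarrow> 'n \<Rightarrow> bool) \<Rightarrow> 'n \<Rightarrow> nat" where
  "degree E v = card {w. E v w}"

definition max_degree :: "('n::finite \<Rightarrow> 'n \<Rightarrow> bool) \<Rightarrow> nat" where
  "max_degree E = Max (range (degree E))"

definition transmission :: "('n::finite \<Rightarrow> 'n \<Rightarrow> bool) \<Rightarrow> 'n \<Rightarrow> real" where
  "transmission E v = (\<Sum>w\<in>UNIV - {v}. real (gdist E v w))"

text \<open>Wiener index W = sum over unordered pairs of distinct vertices = half the ordered sum.\<close>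
definition wiener :: "('n::finite \<Rightarrow> 'n \<Rightarrow> bool) \<Rightarrow> real" where
  "wiener E = (\<Sum>u\<in>UNIV. \<Sum>v\<in>UNIV. real (gdist E u v)) / 2"

definition tv :: "('n::finite \<Rightarrow> 'n \<Rightarrow> bool) \<Rightarrow> 'n \<Rightarrow> real" where
  "tv E v = (\<Sum>w\<in>{w. E v w}. transmission E w) / real (degree E v)"

definition distance_matrix :: "('n::finite \<Rightarrow> 'n \<Rightarrow> bool) \<Rightarrow> real^'n^'n" where
  "distance_matrix E = (\<chi> i j. real (gdist E i j))"

definition transmission_matrix :: "('n::finite \<Rightarrow> 'n \<Rightarrow> bool) \<Rightarrow> real^'n^'n" where
  "transmission_matrix E = (\<chi> i j. if i = j then transmission E i else 0)"

definition dsl_matrix :: "('n::finite \<Rightarrow> 'n \<Rightarrow> bool) \<Rightarrow> real^'n^'n" where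
  "dsl_matrix E = transmission_matrix E + distance_matrix E"

definition eigenvalues :: "real^'n^'n \<Rightarrow> real set" where
  "eigenvalues A = {c. \<exists>x. x \<noteq> 0 \<and> A *v x = c *\<^sub>R x}"

definition q_max :: "('n::finite \<Rightarrow> 'n \<Rightarrow> bool) \<Rightarrow> real" where
  "q_max E = Max (eigenvalues (dsl_matrix E))"

definition q_min :: "('n::finite \<Rightarrow> 'n \<Rightarrow> bool) \<Rightarrow> real" where
  "q_min E = Min (eigenvalues (dsl_matrix E))"

definition a_coef :: "('n::finite \<Rightarrow> 'n \<Rightarrow> bool) \<Rightarrow> 'n \<Rightarrow> real" where
  "a_coef E v = (let n = real CARD('n); \<Delta> = real (max_degree E); W = wiener E;
                     D = transmission E v; t = tv E v in
     4 * (W - D - t * \<Delta>) * (\<Delta> + 1) + 2 * n * \<Delta>^2 + n * D + n * t * \<Delta>)"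

definition b_coef :: "('n::finite \<Rightarrow> 'n \<Rightarrow> bool) \<Rightarrow> 'n \<Rightarrow> real" where
  "b_coef E v = (let \<Delta> = real (max_degree E); W = wiener E;
                     D = transmission E v; t = tv E v in
     4 * D^2 + 8 * D * t * \<Delta> + 4 * t^2 * \<Delta>^2 - 8 * W * \<Delta>^2 - 4 * W * D - 4 * W * t * \<Delta>)"

end

theory Submission
  imports Defs
begin

text \<open>
  For a vertex v of maximum degree, let V be its closed neighbourhood, so that |V| = \<Delta> + 1.
  Testing the Rayleigh quotient of the symmetric matrix Q(G) on vectors that are constant on
  V and on its complement reduces the problem to the 2\<times>2 quotient matrix of block sums,
  and every root of det(S - q diag(|V|, n - |V|)) = 0 is attained as such a quotient, hence
  lies between the least and largest eigenvalue. Bipartiteness forces all neighbours of v to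
  be at distance 2 from each other, which makes the block sum over V explicit; the other block
  sums then follow from the row sums 2 D_i and the total sum 4 W. The two roots of that
  quadratic are the bounds of the statement.
\<close>

section \<open>Rayleigh quotients of symmetric real matrices\<close>

lemma symmetric_matrix_inner:
  fixes A :: "real^'n^'n"
  assumes "transpose A = A"
  shows "(A *v x) \<bullet> y = x \<bullet> (A *v y)"
  by (metis assms dot_lmul_matrix transpose_matrix_vector)

lemma symmetric_matrix_max_rayleigh_eigenvector:
  fixes A :: "real^'n^'n"
  assumes sym: "transpose A = A"
  shows "\<exists>c x. x \<noteq> 0 \<and> A *v x = c *\<^sub>R x \<and> (\<forall>y. y \<bullet> (A *v y) \<le> c * (y \<bullet> y))"
proof -
  define f where "f = (\<lambda>y::real^'n. y \<bullet> (A *v y))"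
  have "continuous_on (sphere 0 1) f"
    unfolding f_def by (intro continuous_intros linear_continuous_on bounded_linear_intros)
  moreover have "sphere (0::real^'n) 1 \<noteq> {}"
    by (simp add: sphere_def) (metis norm_sgn sgn_zero_iff vector_choose_size zero_le_one)
  ultimately obtain x where x: "x \<in> sphere 0 1" and xmax: "\<And>y. y \<in> sphere 0 1 \<Longrightarrow> f y \<le> f x"
    using continuous_attains_sup[OF compact_sphere] by blast
  define c where "c = f x"
  have bound: "f y \<le> c * (y \<bullet> y)" for y
  proof (cases "y = 0")
    case False
    define u where "u = y /\<^sub>R norm y"
    have "f u \<le> c" using xmax False by (simp add: c_def u_def)
    moreover have "f y = (norm y)^2 * f u"
      using False by (simp add: f_def u_def matrix_vector_mult_scaleR power2_eq_square field_simps)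
    ultimately show ?thesis
      by (metis mult.commute mult_right_mono power2_norm_eq_inner zero_le_power2)
  qed (simp add: f_def)
  define r where "r = A *v x - c *\<^sub>R x"
  define g where "g = (\<lambda>y. f y - c * (y \<bullet> y))"
  have g_nonpos: "g y \<le> 0" for y using bound[of y] by (simp add: g_def)
  have "x \<bullet> x = 1" using x by (simp add: power2_norm_eq_inner[symmetric])
  hence gx: "g x = 0" by (simp add: g_def c_def)
  have g_line: "g (x + t *\<^sub>R r) = 2 * t * (r \<bullet> r) + t^2 * g r" for t
  proof -
    have "x \<bullet> (A *v r) = r \<bullet> (A *v x)"
      using symmetric_matrix_inner[OF sym, of r x] by (simp add: inner_commute)
    moreover have "r \<bullet> (A *v x) - c * (x \<bullet> r) = r \<bullet> r"
      by (simp add: r_def inner_diff_left inner_diff_right inner_commute algebra_simps)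
    ultimately show ?thesis
      using gx by (simp add: g_def f_def matrix_vector_right_distrib matrix_vector_mult_scaleR
          inner_add_left inner_add_right algebra_simps power2_eq_square inner_commute[of x r])
  qed
  \<comment> \<open>g attains its maximum 0 at x but has slope 2 (r \<bullet> r) along the residual r.\<close>
  have "r = 0"
  proof (rule ccontr)
    assume "r \<noteq> 0"
    hence rr: "r \<bullet> r > 0" by simp
    define t where "t = (r \<bullet> r) / (1 - g r)"
    have t: "t > 0" "t * (- g r) < r \<bullet> r"
      using g_nonpos[of r] rr by (simp_all add: t_def field_simps)
    have "t * (2 * (r \<bullet> r)) \<le> t * (t * (- g r))"
      using g_nonpos[of "x + t *\<^sub>R r"] by (simp add: g_line power2_eq_square algebra_simps)
    hence "2 * (r \<bullet> r) \<le> t * (- g r)" using t(1) by (rule mult_left_le_imp_le)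
    thus False using t(2) rr by linarith
  qed
  moreover have "x \<noteq> 0" using x by auto
  ultimately show ?thesis using bound unfolding f_def r_def by auto
qed

lemma finite_eigenvalues_symmetric:
  fixes A :: "real^'n^'n"
  assumes sym: "transpose A = A"
  shows "finite (eigenvalues A)"
proof -
  define ev where "ev = (\<lambda>c. SOME x. x \<noteq> 0 \<and> A *v x = c *\<^sub>R x)"
  have ev: "ev c \<noteq> 0 \<and> A *v ev c = c *\<^sub>R ev c" if "c \<in> eigenvalues A" for c
    using that unfolding eigenvalues_def ev_def by (metis (mono_tags, lifting) mem_Collect_eq someI_ex)
  have inj: "inj_on ev (eigenvalues A)"
  proof (rule inj_onI)
    fix c d assume c: "c \<in> eigenvalues A" and d: "d \<in> eigenvalues A" and "ev c = ev d"
    hence "c *\<^sub>R ev c = d *\<^sub>R ev c" using ev[OF c] ev[OF d] by metis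
    thus "c = d" using ev[OF c] by (metis scaleR_cancel_right)
  qed
  have "pairwise orthogonal (ev ` eigenvalues A)"
  proof (clarsimp simp: pairwise_def)
    fix c d assume c: "c \<in> eigenvalues A" and d: "d \<in> eigenvalues A" and "ev c \<noteq> ev d"
    hence "c \<noteq> d" by auto
    moreover have "c * (ev c \<bullet> ev d) = d * (ev c \<bullet> ev d)"
      using symmetric_matrix_inner[OF sym, of "ev c" "ev d"] ev[OF c] ev[OF d] by simp
    ultimately show "orthogonal (ev c) (ev d)" by (simp add: orthogonal_def)
  qed
  moreover have "0 \<notin> ev ` eigenvalues A" using ev by auto
  ultimately have "finite (ev ` eigenvalues A)"
    using pairwise_orthogonal_independent independent_imp_finite by blast
  thus ?thesis using finite_imageD inj by blast
qed

lemma Max_eigenvalues_ge_rayleigh: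
  fixes A :: "real^'n^'n"
  assumes sym: "transpose A = A" and "x \<noteq> 0"
  shows "(x \<bullet> (A *v x)) / (x \<bullet> x) \<le> Max (eigenvalues A)"
proof -
  obtain c y where "y \<noteq> 0" "A *v y = c *\<^sub>R y" and c: "\<And>z. z \<bullet> (A *v z) \<le> c * (z \<bullet> z)"
    using symmetric_matrix_max_rayleigh_eigenvector[OF sym] by blast
  hence "c \<in> eigenvalues A" unfolding eigenvalues_def by blast
  hence "c \<le> Max (eigenvalues A)" using finite_eigenvalues_symmetric[OF sym] by simp
  moreover have "(x \<bullet> (A *v x)) / (x \<bullet> x) \<le> c" using c[of x] \<open>x \<noteq> 0\<close> by (simp add: divide_le_eq)
  ultimately show ?thesis by linarith
qed

lemma Min_eigenvalues_le_rayleigh: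
  fixes A :: "real^'n^'n"
  assumes sym: "transpose A = A" and "x \<noteq> 0"
  shows "Min (eigenvalues A) \<le> (x \<bullet> (A *v x)) / (x \<bullet> x)"
proof -
  have neg: "(- A) *v z = - (A *v z)" for z :: "real^'n"
    by (simp add: vec_eq_iff matrix_vector_mult_def sum_negf)
  have "transpose (- A) = - A" using sym by (metis transpose_scalar scaleR_minus1_left)
  then obtain c y where "y \<noteq> 0" "(- A) *v y = c *\<^sub>R y"
    and c: "\<And>z. z \<bullet> ((- A) *v z) \<le> c * (z \<bullet> z)"
    using symmetric_matrix_max_rayleigh_eigenvector by blast
  hence "- c \<in> eigenvalues A" using neg unfolding eigenvalues_def
    by (metis (mono_tags, lifting) mem_Collect_eq minus_equation_iff scaleR_minus_left)
  hence "Min (eigenvalues A) \<le> - c" using finite_eigenvalues_symmetric[OF sym] by simp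
  moreover have "- c \<le> (x \<bullet> (A *v x)) / (x \<bullet> x)"
    using c[of x] \<open>x \<noteq> 0\<close> neg[of x] by (simp add: le_divide_eq)
  ultimately show ?thesis by linarith
qed

section \<open>Block sums and two-level test vectors\<close>

lemma sum_split_Compl: "(\<Sum>i\<in>UNIV. f i) = (\<Sum>i\<in>V. f i) + (\<Sum>i\<in>-V. f i :: 'a::comm_monoid_add)"
  for V :: "'n::finite set"
  by (metis Compl_eq_Diff_UNIV add.commute finite sum.subset_diff top_greatest)

definition block_sum :: "real^'n^'n \<Rightarrow> 'n::finite set \<Rightarrow> 'n set \<Rightarrow> real" where
  "block_sum A X Y = (\<Sum>i\<in>X. \<Sum>j\<in>Y. A $ i $ j)"

definition two_level_vector :: "'n::finite set \<Rightarrow> real \<Rightarrow> real \<Rightarrow> real^'n" where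
  "two_level_vector V \<alpha> \<beta> = (\<chi> i. if i \<in> V then \<alpha> else \<beta>)"

lemma block_sum_transpose_symmetric:
  fixes A :: "real^'n::finite^'n"
  assumes "transpose A = A"
  shows "block_sum A Y X = block_sum A X Y"
proof -
  have "A $ i $ j = A $ j $ i" for i j using assms by (metis transpose_def vec_lambda_beta)
  thus ?thesis unfolding block_sum_def by (subst sum.swap) simp
qed

lemma block_sum_add_Compl:
  "block_sum A X Y + block_sum A X (-Y) = (\<Sum>i\<in>X. \<Sum>j\<in>UNIV. A $ i $ j)"
  unfolding block_sum_def by (simp add: sum_split_Compl[of _ Y] sum.distrib)

lemma block_sum_total:
  "block_sum A X X + block_sum A X (-X) + block_sum A (-X) X + block_sum A (-X) (-X)
     = (\<Sum>i\<in>UNIV. \<Sum>j\<in>UNIV. A $ i $ j)"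
  using block_sum_add_Compl[of A X X] block_sum_add_Compl[of A "-X" X]
    sum_split_Compl[of "\<lambda>i. \<Sum>j\<in>UNIV. A $ i $ j" X]
  by simp

lemma inner_two_level_vector:
  "two_level_vector V \<alpha> \<beta> \<bullet> two_level_vector V \<alpha> \<beta> = real (card V) * \<alpha>^2 + real (card (-V)) * \<beta>^2"
proof -
  have "(\<Sum>i\<in>V. (two_level_vector V \<alpha> \<beta> $ i)^2) = (\<Sum>i\<in>V. \<alpha>^2)"
    "(\<Sum>i\<in>-V. (two_level_vector V \<alpha> \<beta> $ i)^2) = (\<Sum>i\<in>-V. \<beta>^2)"
    by (auto intro!: sum.cong simp: two_level_vector_def)
  thus ?thesis
    by (simp add: inner_vec_def sum_split_Compl[of _ V] power2_eq_square)
qed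

lemma quadratic_form_two_level_vector:
  fixes A :: "real^'n::finite^'n" and V :: "'n set" and \<alpha> \<beta> :: real
  defines "x \<equiv> two_level_vector V \<alpha> \<beta>"
  shows "x \<bullet> (A *v x) = \<alpha>^2 * block_sum A V V + \<alpha> * \<beta> * (block_sum A V (-V) + block_sum A (-V) V)
                         + \<beta>^2 * block_sum A (-V) (-V)"
proof -
  have split: "(\<Sum>j\<in>UNIV. f j * x $ j) = (\<Sum>j\<in>V. f j) * \<alpha> + (\<Sum>j\<in>-V. f j) * \<beta>" for f
  proof -
    have "(\<Sum>j\<in>V. f j * x $ j) = (\<Sum>j\<in>V. f j * \<alpha>)" "(\<Sum>j\<in>-V. f j * x $ j) = (\<Sum>j\<in>-V. f j * \<beta>)"
      by (auto intro!: sum.cong simp: x_def two_level_vector_def)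
    thus ?thesis by (simp add: sum_split_Compl[of _ V] sum_distrib_right)
  qed
  have row: "(A *v x) $ i = (\<Sum>j\<in>V. A $ i $ j) * \<alpha> + (\<Sum>j\<in>-V. A $ i $ j) * \<beta>" for i
    unfolding matrix_vector_mult_def by (simp add: split)
  have "x \<bullet> (A *v x) = (\<Sum>i\<in>UNIV. (A *v x) $ i * x $ i)"
    by (simp add: inner_vec_def mult.commute)
  also have "\<dots> = (\<Sum>i\<in>V. (A *v x) $ i) * \<alpha> + (\<Sum>i\<in>-V. (A *v x) $ i) * \<beta>"
    by (rule split)
  finally show ?thesis
    by (simp add: row block_sum_def sum.distrib sum_distrib_left sum_distrib_right algebra_simps
        power2_eq_square)
qed

text \<open>The witness (\<alpha>, \<beta>) lies in the kernel of [[s11 - l p, s12], [s12, s22 - l q]].\<close>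
lemma pencil_root_is_weighted_rayleigh_quotient:
  fixes p q s11 s12 s22 l :: real
  assumes p: "p > 0" and q: "q > 0"
    and root: "(s11 - l * p) * (s22 - l * q) = s12^2"
  shows "\<exists>\<alpha> \<beta>. p * \<alpha>^2 + q * \<beta>^2 > 0 \<and>
           \<alpha>^2 * s11 + 2 * \<alpha> * \<beta> * s12 + \<beta>^2 * s22 = l * (p * \<alpha>^2 + q * \<beta>^2)"
proof (cases "s12 = 0 \<and> l * p = s11")
  case True
  thus ?thesis using p by (intro exI[of _ 1] exI[of _ 0]) simp
next
  case False
  define \<alpha> where "\<alpha> = s12"
  define \<beta> where "\<beta> = l * p - s11"
  have "\<alpha> \<noteq> 0 \<or> \<beta> \<noteq> 0" using False by (auto simp: \<alpha>_def \<beta>_def)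
  hence "p * \<alpha>^2 + q * \<beta>^2 > 0"
    using p q by (auto intro: add_pos_nonneg add_nonneg_pos)
  moreover
  have "\<alpha>^2 * s11 + 2 * \<alpha> * \<beta> * s12 + \<beta>^2 * s22 - l * (p * \<alpha>^2 + q * \<beta>^2)
        = \<alpha> * (\<alpha> * (s11 - l * p) + \<beta> * s12) + \<beta> * (\<alpha> * s12 + \<beta> * (s22 - l * q))"
    by (simp add: algebra_simps power2_eq_square)
  moreover have "\<alpha> * (s11 - l * p) + \<beta> * s12 = 0"
    by (simp add: \<alpha>_def \<beta>_def algebra_simps)
  moreover have "\<alpha> * s12 + \<beta> * (s22 - l * q) = 0"
    using root by (simp add: \<alpha>_def \<beta>_def algebra_simps power2_eq_square)
  ultimately show ?thesis by (intro exI[of _ \<alpha>] exI[of _ \<beta>]) simp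
qed

lemma quadratic_formula_root:
  fixes p q s11 s12 s22 sg :: real
  assumes "p > 0" and "q > 0" and sg: "sg = 1 \<or> sg = -1"
  defines "a \<equiv> q * s11 + p * s22" and "b \<equiv> s12^2 - s11 * s22"
  defines "l \<equiv> (a + sg * sqrt (a^2 + 4 * b * p * q)) / (2 * p * q)"
  shows "(s11 - l * p) * (s22 - l * q) = s12^2"
proof -
  have "a^2 + 4 * b * p * q = (q * s11 - p * s22)^2 + 4 * p * q * s12^2"
    by (simp add: a_def b_def algebra_simps power2_eq_square)
  hence "(sqrt (a^2 + 4 * b * p * q))^2 = a^2 + 4 * b * p * q"
    using assms(1,2) by simp
  moreover have "sg^2 = 1" using sg by auto
  moreover have "2 * p * q * l = a + sg * sqrt (a^2 + 4 * b * p * q)"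
    using assms(1,2) by (simp add: l_def)
  ultimately have "(2 * p * q * l - a)^2 = a^2 + 4 * b * p * q"
    by (simp add: power_mult_distrib)
  hence "4 * p * q * (p * q * l^2 - a * l - b) = 0"
    by (simp add: algebra_simps power2_eq_square)
  hence "p * q * l^2 - a * l - b = 0" using assms(1,2) by simp
  thus ?thesis by (simp add: a_def b_def algebra_simps power2_eq_square)
qed

lemma eigenvalues_bracket_two_block_pencil_root:
  fixes Q :: "real^'n::finite^'n" and V :: "'n set" and l :: real
  assumes sym: "transpose Q = Q" and "V \<noteq> {}" and "-V \<noteq> {}"
    and root: "(block_sum Q V V - l * card V) * (block_sum Q (-V) (-V) - l * card (-V))
               = (block_sum Q V (-V))^2"
  shows "l \<le> Max (eigenvalues Q) \<and> Min (eigenvalues Q) \<le> l"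
proof -
  have "real (card V) > 0" "real (card (-V)) > 0"
    using assms(2,3) by (simp_all add: card_gt_0_iff)
  then obtain \<alpha> \<beta> where pos: "real (card V) * \<alpha>^2 + real (card (-V)) * \<beta>^2 > 0"
    and eq: "\<alpha>^2 * block_sum Q V V + 2 * \<alpha> * \<beta> * block_sum Q V (-V) + \<beta>^2 * block_sum Q (-V) (-V)
      = l * (real (card V) * \<alpha>^2 + real (card (-V)) * \<beta>^2)"
    using pencil_root_is_weighted_rayleigh_quotient[OF _ _ root] by blast
  define x where "x = two_level_vector V \<alpha> \<beta>"
  have xx: "x \<bullet> x > 0" using pos by (simp add: x_def inner_two_level_vector)
  have "x \<bullet> (Q *v x) = l * (x \<bullet> x)"
    using eq block_sum_transpose_symmetric[OF sym, of "-V" V]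
    by (simp add: x_def quadratic_form_two_level_vector inner_two_level_vector algebra_simps)
  hence "(x \<bullet> (Q *v x)) / (x \<bullet> x) = l" using xx by simp
  moreover have "x \<noteq> 0" using xx by auto
  ultimately show ?thesis
    using Max_eigenvalues_ge_rayleigh[OF sym] Min_eigenvalues_le_rayleigh[OF sym] by metis
qed

section \<open>Graph distance\<close>

definition walk_of_length :: "('n \<Rightarrow> 'n \<Rightarrow> bool) \<Rightarrow> 'n \<Rightarrow> 'n \<Rightarrow> nat \<Rightarrow> bool" where
  "walk_of_length E u v k \<longleftrightarrow> (\<exists>p. walk E p \<and> hd p = u \<and> last p = v \<and> length p = Suc k)"

lemma walk_not_Nil: "walk E p \<Longrightarrow> p \<noteq> []"
  by (cases p) auto

lemma walk_append_edge: "walk E (xs @ [y]) \<Longrightarrow> E y z \<Longrightarrow> walk E (xs @ [y, z])"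
  by (induction xs rule: induct_list012) auto

lemma walk_rev: "(\<forall>u v. E u v \<longrightarrow> E v u) \<Longrightarrow> walk E p \<Longrightarrow> walk E (rev p)"
proof (induction E p rule: walk.induct)
  case (3 E x y xs)
  thus ?case using walk_append_edge[of E "rev xs" y x] by simp
qed auto

lemma gdist_le: "walk_of_length E u v k \<Longrightarrow> gdist E u v \<le> k"
  unfolding gdist_def walk_of_length_def by (rule Least_le) auto

lemma walk_of_length_gdist:
  assumes "connected_graph E"
  shows "walk_of_length E u v (gdist E u v)"
proof -
  obtain p where p: "walk E p" "hd p = u" "last p = v"
    using assms unfolding connected_graph_def by blast
  hence "walk_of_length E u v (length p - 1)"
    using walk_not_Nil[OF p(1)] unfolding walk_of_length_def by (intro exI[of _ p]) auto
  thus ?thesis unfolding gdist_def walk_of_length_def[symmetric] by (rule LeastI)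
qed

lemma gdist_le_commute:
  assumes "simple_graph E" "connected_graph E"
  shows "gdist E u v \<le> gdist E v u"
proof -
  obtain p where p: "walk E p" "hd p = v" "last p = u" "length p = Suc (gdist E v u)"
    using walk_of_length_gdist[OF assms(2)] unfolding walk_of_length_def by blast
  hence "walk_of_length E u v (gdist E v u)"
    using walk_rev[of E p] walk_not_Nil[OF p(1)] assms(1) unfolding walk_of_length_def simple_graph_def
    by (intro exI[of _ "rev p"]) (auto simp: hd_rev last_rev)
  thus ?thesis by (rule gdist_le)
qed

lemma gdist_commute:
  assumes "simple_graph E" "connected_graph E"
  shows "gdist E u v = gdist E v u"
  using gdist_le_commute[OF assms] le_antisym by blast

lemma gdist_self [simp]: "gdist E u u = 0"
proof -
  have "walk_of_length E u u 0" unfolding walk_of_length_def by (intro exI[of _ "[u]"]) auto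
  thus ?thesis using gdist_le by fastforce
qed

lemma walk_of_length_eq_Suc_0:
  "walk_of_length E u v (Suc 0) \<longleftrightarrow> E u v"
proof
  assume "walk_of_length E u v (Suc 0)"
  then obtain p where "walk E p" "hd p = u" "last p = v" "length p = Suc (Suc 0)"
    unfolding walk_of_length_def by blast
  thus "E u v" by (cases p rule: remdups_adj.cases) auto
qed (auto simp: walk_of_length_def intro!: exI[of _ "[u, v]"])

lemma gdist_eq_0_iff:
  assumes "connected_graph E"
  shows "gdist E u v = 0 \<longleftrightarrow> u = v"
proof
  assume "gdist E u v = 0"
  then obtain p where "walk E p" "hd p = u" "last p = v" "length p = Suc 0"
    using walk_of_length_gdist[OF assms, of u v] unfolding walk_of_length_def by auto
  thus "u = v" by (cases p) auto
qed simp

lemma gdist_eq_1_iff: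
  assumes "simple_graph E" "connected_graph E"
  shows "gdist E u v = 1 \<longleftrightarrow> E u v"
proof
  assume "E u v"
  hence "gdist E u v \<le> 1" using gdist_le walk_of_length_eq_Suc_0 by (metis One_nat_def)
  moreover have "u \<noteq> v" using \<open>E u v\<close> assms(1) unfolding simple_graph_def by auto
  ultimately show "gdist E u v = 1" using gdist_eq_0_iff[OF assms(2), of u v] by linarith
next
  assume "gdist E u v = 1"
  thus "E u v" using walk_of_length_gdist[OF assms(2), of u v] by (simp add: walk_of_length_eq_Suc_0)
qed

text \<open>Two adjacent neighbours of v would close an odd cycle.\<close>
lemma gdist_common_neighbour_bipartite:
  assumes "simple_graph E" "connected_graph E" "bipartite E"
    and "E v a" "E v b" "a \<noteq> b"
  shows "gdist E a b = 2"
proof -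
  have "walk_of_length E a b 2"
    using assms(1,4,5) unfolding walk_of_length_def simple_graph_def by (intro exI[of _ "[a, v, b]"]) auto
  hence "gdist E a b \<le> 2" by (rule gdist_le)
  moreover have "\<not> E a b" using assms(3-5) unfolding bipartite_def by blast
  moreover have "gdist E a b \<noteq> 0" "gdist E a b \<noteq> 1"
    using gdist_eq_0_iff[OF assms(2)] gdist_eq_1_iff[OF assms(1,2)] assms(6) \<open>\<not> E a b\<close> by auto
  ultimately show ?thesis by linarith
qed

section \<open>Block sums of the distance signless Laplacian\<close>

lemma dsl_matrix_entry:
  "dsl_matrix E $ i $ j = (if i = j then transmission E i else 0) + real (gdist E i j)"
  by (simp add: dsl_matrix_def transmission_matrix_def distance_matrix_def)

lemma dsl_matrix_symmetric:
  assumes "simple_graph E" "connected_graph E"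
  shows "transpose (dsl_matrix E) = dsl_matrix E"
  by (simp add: vec_eq_iff transpose_def dsl_matrix_entry gdist_commute[OF assms])

lemma sum_gdist_eq_transmission: "(\<Sum>j\<in>UNIV. real (gdist E i j)) = transmission E i"
  unfolding transmission_def by (simp add: sum.remove[of UNIV i])

lemma dsl_matrix_row_sum: "(\<Sum>j\<in>UNIV. dsl_matrix E $ i $ j) = 2 * transmission E i"
  by (simp add: dsl_matrix_entry sum.distrib sum_gdist_eq_transmission)

lemma sum_transmission_eq_wiener: "(\<Sum>i\<in>UNIV. transmission E i) = 2 * wiener E"
  by (simp add: wiener_def sum_gdist_eq_transmission[symmetric])

text \<open>This holds also for an isolated vertex, where tv is 0 by division by zero.\<close>
lemma sum_transmission_neighbours:
  "(\<Sum>w\<in>{w. E v w}. transmission E w) = real (degree E v) * tv E v"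
  by (cases "degree E v = 0") (simp_all add: tv_def degree_def)

definition closed_nbhd :: "('n \<Rightarrow> 'n \<Rightarrow> bool) \<Rightarrow> 'n \<Rightarrow> 'n set" where
  "closed_nbhd E v = insert v {w. E v w}"

lemma card_closed_nbhd:
  assumes "simple_graph E"
  shows "card (closed_nbhd E v) = Suc (degree E v)"
  using assms unfolding closed_nbhd_def degree_def simple_graph_def by simp

lemma sum_transmission_closed_nbhd:
  assumes "simple_graph E"
  shows "(\<Sum>i\<in>closed_nbhd E v. transmission E i) = transmission E v + real (degree E v) * tv E v"
  using assms sum_transmission_neighbours[of E v]
  unfolding closed_nbhd_def simple_graph_def by simp

lemma sum_gdist_closed_nbhd_bipartite:
  fixes E :: "'n::finite \<Rightarrow> 'n \<Rightarrow> bool"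
  assumes G: "simple_graph E" "connected_graph E" "bipartite E"
  shows "(\<Sum>i\<in>closed_nbhd E v. \<Sum>j\<in>closed_nbhd E v. real (gdist E i j)) = 2 * (real (degree E v))^2"
proof -
  define N where "N = {w. E v w}"
  define d where "d = real (degree E v)"
  have vN: "v \<notin> N" using G(1) unfolding N_def simple_graph_def by auto
  have cN: "real (card N) = d" by (simp add: N_def d_def degree_def)
  have "(\<Sum>j\<in>N. real (gdist E v j)) = (\<Sum>j\<in>N. 1)"
    by (rule sum.cong) (auto simp: N_def gdist_eq_1_iff[OF G(1,2), unfolded One_nat_def])
  hence from_v: "(\<Sum>j\<in>N. real (gdist E v j)) = d" using cN by simp
  hence to_v: "(\<Sum>j\<in>N. real (gdist E j v)) = d" by (simp add: gdist_commute[OF G(1,2), of _ v])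
  have within: "(\<Sum>j\<in>N. real (gdist E i j)) = 2 * (d - 1)" if "i \<in> N" for i
  proof -
    have "(\<Sum>j\<in>N. real (gdist E i j)) = (\<Sum>j\<in>N - {i}. real (gdist E i j))"
      using that by (simp add: sum.remove)
    also have "\<dots> = (\<Sum>j\<in>N - {i}. 2)"
      using that by (intro sum.cong) (auto simp: N_def gdist_common_neighbour_bipartite[OF G])
    also have "\<dots> = 2 * (real (card N) - 1)"
    proof -
      have "card N \<ge> 1" using that card_0_eq[of N] by fastforce
      thus ?thesis using that by (simp add: of_nat_diff)
    qed
    finally show ?thesis using cN by simp
  qed
  have "(\<Sum>i\<in>closed_nbhd E v. \<Sum>j\<in>closed_nbhd E v. real (gdist E i j))
        = (\<Sum>j\<in>N. real (gdist E v j)) + (\<Sum>i\<in>N. real (gdist E i v) + (\<Sum>j\<in>N. real (gdist E i j)))"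
    using vN by (simp add: closed_nbhd_def N_def[symmetric])
  also have "\<dots> = d + (d + d * (2 * (d - 1)))"
    by (simp add: sum.distrib from_v to_v within cN)
  finally show ?thesis by (simp add: d_def algebra_simps power2_eq_square)
qed

lemma block_sum_closed_nbhd:
  assumes "simple_graph E" "connected_graph E" "bipartite E"
  shows "block_sum (dsl_matrix E) (closed_nbhd E v) (closed_nbhd E v)
           = transmission E v + real (degree E v) * tv E v + 2 * (real (degree E v))^2"
proof -
  have "(\<Sum>i\<in>closed_nbhd E v. \<Sum>j\<in>closed_nbhd E v. if i = j then transmission E i else 0)
        = (\<Sum>i\<in>closed_nbhd E v. transmission E i)"
    by (rule sum.cong) auto
  thus ?thesis
    unfolding block_sum_def dsl_matrix_entry sum.distrib
    by (simp add: sum_transmission_closed_nbhd[OF assms(1)] sum_gdist_closed_nbhd_bipartite[OF assms])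
qed

lemma block_sum_closed_nbhd_rows:
  assumes "simple_graph E"
  shows "block_sum (dsl_matrix E) (closed_nbhd E v) (closed_nbhd E v)
           + block_sum (dsl_matrix E) (closed_nbhd E v) (- closed_nbhd E v)
         = 2 * (transmission E v + real (degree E v) * tv E v)"
  unfolding block_sum_add_Compl dsl_matrix_row_sum
  by (simp add: sum_distrib_left[symmetric] sum_transmission_closed_nbhd[OF assms])

lemma block_sum_dsl_matrix_total:
  "block_sum (dsl_matrix E) X X + block_sum (dsl_matrix E) X (-X)
     + block_sum (dsl_matrix E) (-X) X + block_sum (dsl_matrix E) (-X) (-X) = 4 * wiener E"
  unfolding block_sum_total dsl_matrix_row_sum
  by (simp add: sum_distrib_left[symmetric] sum_transmission_eq_wiener)

lemma coefs_eq_block_sums: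
  fixes E :: "'n::finite \<Rightarrow> 'n \<Rightarrow> bool"
  assumes G: "simple_graph E" "connected_graph E" "bipartite E"
    and dv: "degree E v = max_degree E"
  defines "s11 \<equiv> block_sum (dsl_matrix E) (closed_nbhd E v) (closed_nbhd E v)"
    and "s12 \<equiv> block_sum (dsl_matrix E) (closed_nbhd E v) (- closed_nbhd E v)"
    and "s22 \<equiv> block_sum (dsl_matrix E) (- closed_nbhd E v) (- closed_nbhd E v)"
    and "\<Delta> \<equiv> real (max_degree E)" and "n \<equiv> real CARD('n)"
  shows "a_coef E v = (n - \<Delta> - 1) * s11 + (1 + \<Delta>) * s22"
    and "b_coef E v = s12^2 - s11 * s22"
proof -
  define X where "X = transmission E v + \<Delta> * tv E v"
  have s11: "s11 = X + 2 * \<Delta>^2"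
    using block_sum_closed_nbhd[OF G, of v] dv by (simp add: s11_def X_def \<Delta>_def)
  have "s11 + s12 = 2 * X"
    using block_sum_closed_nbhd_rows[OF G(1), of v] dv by (simp add: s11_def s12_def X_def \<Delta>_def)
  hence s12: "s12 = X - 2 * \<Delta>^2" using s11 by simp
  have "block_sum (dsl_matrix E) (- closed_nbhd E v) (closed_nbhd E v) = s12"
    unfolding s12_def by (rule block_sum_transpose_symmetric[OF dsl_matrix_symmetric[OF G(1,2)]])
  hence "s11 + 2 * s12 + s22 = 4 * wiener E"
    using block_sum_dsl_matrix_total[of E "closed_nbhd E v"] by (simp add: s11_def s12_def s22_def)
  hence s22: "s22 = 4 * wiener E - 3 * X + 2 * \<Delta>^2" using s11 s12 by simp
  show "a_coef E v = (n - \<Delta> - 1) * s11 + (1 + \<Delta>) * s22"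
    unfolding s11 s22 a_coef_def Let_def n_def[symmetric] \<Delta>_def[symmetric] X_def
    by (simp add: algebra_simps power2_eq_square)
  show "b_coef E v = s12^2 - s11 * s22"
    unfolding s11 s12 s22 b_coef_def Let_def \<Delta>_def[symmetric] X_def
    by (simp add: algebra_simps power2_eq_square)
qed

lemma dsl_eigenvalues_bracket_max_degree_vertex:
  fixes E :: "'n::finite \<Rightarrow> 'n \<Rightarrow> bool" and sg :: real
  assumes G: "simple_graph E" "connected_graph E" "bipartite E"
    and md: "max_degree E + 2 \<le> CARD('n)"
    and dv: "degree E v = max_degree E"
    and sg: "sg = 1 \<or> sg = -1"
  defines "\<Delta> \<equiv> real (max_degree E)" and "n \<equiv> real CARD('n)"
  defines "l \<equiv> (a_coef E v + sg * sqrt ((a_coef E v)^2 + 4 * b_coef E v * (1 + \<Delta>) * (n - \<Delta> - 1)))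
                / (2 * (1 + \<Delta>) * (n - \<Delta> - 1))"
  shows "q_min E \<le> l \<and> l \<le> q_max E"
proof -
  define V where "V = closed_nbhd E v"
  define s11 s12 s22 where "s11 = block_sum (dsl_matrix E) V V"
    and "s12 = block_sum (dsl_matrix E) V (-V)" and "s22 = block_sum (dsl_matrix E) (-V) (-V)"
  have n: "real (max_degree E) + 2 \<le> real CARD('n)" using md by linarith
  moreover have "card V = max_degree E + 1" using card_closed_nbhd[OF G(1)] dv by (simp add: V_def)
  moreover have "card (-V) = CARD('n) - card V"
    using card_Diff_subset[of V UNIV] by (simp add: Compl_eq_Diff_UNIV)
  ultimately have p: "real (card V) = 1 + \<Delta>" and q: "real (card (-V)) = n - \<Delta> - 1"
    by (simp_all add: \<Delta>_def n_def of_nat_diff)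
  have pos: "1 + \<Delta> > 0" "n - \<Delta> - 1 > 0" using n by (simp_all add: \<Delta>_def n_def)
  have l_eq: "l = (((n - \<Delta> - 1) * s11 + (1 + \<Delta>) * s22)
                   + sg * sqrt (((n - \<Delta> - 1) * s11 + (1 + \<Delta>) * s22)^2
                                + 4 * (s12^2 - s11 * s22) * (1 + \<Delta>) * (n - \<Delta> - 1)))
                  / (2 * (1 + \<Delta>) * (n - \<Delta> - 1))"
    unfolding l_def coefs_eq_block_sums[OF G dv] s11_def s12_def s22_def V_def \<Delta>_def n_def ..
  have "(s11 - l * card V) * (s22 - l * card (-V)) = s12^2"
    unfolding p q l_eq using pos sg by (rule quadratic_formula_root)
  moreover have "V \<noteq> {}" "-V \<noteq> {}" using p q pos by auto
  ultimately show ?thesis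
    using eigenvalues_bracket_two_block_pencil_root[OF dsl_matrix_symmetric[OF G(1,2)]]
    by (simp add: s11_def s12_def s22_def q_min_def q_max_def)
qed

theorem corollary4p2:
  fixes E :: "'n::finite \<Rightarrow> 'n \<Rightarrow> bool" and K :: "'n set"
  assumes "simple_graph E" and "connected_graph E" and "bipartite E"
      and "CARD('n) \<ge> 3"
      and "max_degree E \<le> CARD('n) - 2"
      and "K \<noteq> {}" and "\<forall>v\<in>K. degree E v = max_degree E"
  shows "(q_max E \<ge> Max ((\<lambda>v. (a_coef E v + sqrt ((a_coef E v)^2
              + 4 * b_coef E v * (1 + real (max_degree E)) * (real CARD('n) - real (max_degree E) - 1)))
            / (2 * (1 + real (max_degree E)) * (real CARD('n) - real (max_degree E) - 1))) ` K)) \<and>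
         (q_min E \<le> Min ((\<lambda>v. (a_coef E v - sqrt ((a_coef E v)^2
              + 4 * b_coef E v * (1 + real (max_degree E)) * (real CARD('n) - real (max_degree E) - 1)))
            / (2 * (1 + real (max_degree E)) * (real CARD('n) - real (max_degree E) - 1))) ` K))"
proof -
  have "max_degree E + 2 \<le> CARD('n)" using assms(4,5) by linarith
  thus ?thesis
    using dsl_eigenvalues_bracket_max_degree_vertex[OF assms(1-3), where sg = 1]
      dsl_eigenvalues_bracket_max_degree_vertex[OF assms(1-3), where sg = "-1"] assms(6,7)
    by simp
qed

end
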